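(* Let $A_t$, $t\in I$ ($I$ an interval), be a solution of the ODE $\dot A_t=A_t[A_t,A_t^*]$ in $\mathfrak{gl}_n(\mathbb C)$. Then $t\mapsto\|A_t\|^2=\mathrm{tr}(A_tA_t^* )$ is monotonically non-increasing, and $\frac{d}{dt}\|A_t\|^2=0$ at a time $t$ if and only if $A_t$ is normal.
   Context: $A^*$ denotes the conjugate transpose (adjoint with respect to the standard Hermitian inner product on $\mathbb C^n$), $[X,Y]=XY-YX$, and $\|A\|^2=\mathrm{tr}(AA^* )$. *)

theory Defs
  imports "HOL-Analysis.Analysis"
begin

definition cadj :: "complex^'n^'n \<Rightarrow> complex^'n^'n" where
  "cadj A = (\<chi> i j. cnj (A $ j $ i))"

definition commut :: "complex^'n^'n \<Rightarrow> complex^'n^'n \<Rightarrow> complex^'n^'n" where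
  "commut X Y = X ** Y - Y ** X"

definition sqnorm :: "complex^'n^'n \<Rightarrow> real" where
  "sqnorm A = Re (trace (A ** cadj A))"

definition normal_matrix :: "complex^'n^'n \<Rightarrow> bool" where
  "normal_matrix A \<longleftrightarrow> A ** cadj A = cadj A ** A"

end

theory Submission
  imports Defs
begin

text \<open>Identifying \<open>n \<times> n\<close> complex matrices with the Euclidean space of their entries gives
  \<open>X \<bullet> Y = Re tr(X Y\<^sup>*)\<close> and \<open>sqnorm A = \<parallel>A\<parallel>\<^sup>2\<close>. Along the flow \<open>A' = A N\<close>, where
  \<open>N = [A, A\<^sup>*]\<close> is Hermitian, \<open>(\<parallel>A\<parallel>\<^sup>2)' = 2 Re tr(A N A\<^sup>*) = 2 Re tr(N A\<^sup>* A)\<close>.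
  By cyclicity of the trace \<open>tr(N A A\<^sup>*) = - tr(N A\<^sup>* A)\<close>, and \<open>\<parallel>N\<parallel>\<^sup>2 = tr(N A A\<^sup>*) - tr(N A\<^sup>* A)\<close>,
  so the derivative is \<open>-\<parallel>N\<parallel>\<^sup>2\<close>: non-positive, and zero exactly when \<open>A\<close> is normal.\<close>

lemma matrix_diff_ldistrib: "(A::'a::ring_1^'n^'m) ** (B - C) = A ** B - A ** C"
  by (simp add: matrix_matrix_mult_def vec_eq_iff algebra_simps sum_subtractf)

lemma matrix_diff_rdistrib: "((A::'a::ring_1^'n^'m) - B) ** C = A ** C - B ** C"
  by (simp add: matrix_matrix_mult_def vec_eq_iff algebra_simps sum_subtractf)

lemma cadj_cadj [simp]: "cadj (cadj A) = A"
  by (simp add: cadj_def vec_eq_iff)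

lemma cadj_mult: "cadj (A ** B) = cadj B ** cadj A"
  by (simp add: cadj_def vec_eq_iff matrix_matrix_mult_def mult.commute)

lemma cadj_diff: "cadj (A - B) = cadj A - cadj B"
  by (simp add: cadj_def vec_eq_iff)

lemma cadj_commut_cadj: "cadj (commut A (cadj A)) = commut A (cadj A)"
  by (simp add: commut_def cadj_diff cadj_mult)

lemma inner_matrix_eq_trace: "A \<bullet> B = Re (trace (A ** cadj B))"
  by (simp add: inner_vec_def trace_def matrix_matrix_mult_def cadj_def inner_complex_def Re_sum)

lemma sqnorm_eq_norm_power2: "sqnorm A = (norm A)\<^sup>2"
  by (simp add: sqnorm_def inner_matrix_eq_trace flip: dot_square_norm)

lemma normal_matrix_iff_commut_cadj_eq_0: "normal_matrix A \<longleftrightarrow> commut A (cadj A) = 0"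
  by (simp add: normal_matrix_def commut_def)

lemma inner_mult_commut_cadj:
  fixes A :: "complex^'n^'n"
  defines "N \<equiv> commut A (cadj A)"
  shows "A \<bullet> (A ** N) = - (norm N)\<^sup>2 / 2"
proof -
  let ?P = "A ** cadj A" and ?Q = "cadj A ** A"
  have N: "N = ?P - ?Q"
    by (simp add: N_def commut_def)
  have PP_QQ: "trace (?P ** ?P) = trace (?Q ** ?Q)"
    by (metis trace_mul_sym matrix_mul_assoc)
  have QP_PQ: "trace (?Q ** ?P) = trace (?P ** ?Q)"
    by (rule trace_mul_sym)
  have "A \<bullet> (A ** N) = Re (trace (A ** (N ** cadj A)))"
    by (simp add: inner_matrix_eq_trace cadj_mult N_def cadj_commut_cadj)
  also have "trace (A ** (N ** cadj A)) = trace (N ** ?Q)"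
    by (metis trace_mul_sym matrix_mul_assoc)
  also have "\<dots> = trace (?P ** ?Q) - trace (?Q ** ?Q)"
    by (simp add: N matrix_diff_rdistrib trace_sub)
  finally have lhs: "A \<bullet> (A ** N) = Re (trace (?P ** ?Q) - trace (?Q ** ?Q))" .
  have "(norm N)\<^sup>2 = Re (trace (N ** N))"
    by (simp add: inner_matrix_eq_trace N_def cadj_commut_cadj flip: dot_square_norm)
  also have "trace (N ** N) = trace (?P ** ?P) - trace (?P ** ?Q) - trace (?Q ** ?P) + trace (?Q ** ?Q)"
    by (simp add: N matrix_diff_rdistrib matrix_diff_ldistrib trace_sub trace_add)
  finally have "(norm N)\<^sup>2 = Re (2 * trace (?Q ** ?Q) - 2 * trace (?P ** ?Q))"
    by (simp add: PP_QQ QP_PQ)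
  with lhs show ?thesis
    by simp
qed

lemma has_real_derivative_norm_power2:
  fixes f :: "real \<Rightarrow> 'a::real_inner"
  assumes "(f has_vector_derivative f') (at t within S)"
  shows "((\<lambda>s. (norm (f s))\<^sup>2) has_real_derivative 2 * (f t \<bullet> f')) (at t within S)"
proof -
  have "(f has_derivative (\<lambda>h. h *\<^sub>R f')) (at t within S)"
    using assms by (simp add: has_vector_derivative_def)
  from has_derivative_inner[OF this this] show ?thesis
    unfolding has_field_derivative_def dot_square_norm
    by (rule has_derivative_eq_rhs) (auto simp: fun_eq_iff inner_commute algebra_simps)
qed

lemma sqnorm_has_real_derivative_along_flow:
  assumes "(A has_vector_derivative (A t ** commut (A t) (cadj (A t)))) (at t within I)"
  shows "((\<lambda>s. sqnorm (A s)) has_real_derivative - (norm (commut (A t) (cadj (A t))))\<^sup>2)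
           (at t within I)"
  using has_real_derivative_norm_power2[OF assms]
  by (simp add: sqnorm_eq_norm_power2 inner_mult_commut_cadj)

lemma at_within_interval_neq_bot:
  assumes "is_interval (I::real set)" "a \<in> I" "b \<in> I" "a < b" "t \<in> I"
  shows "at t within I \<noteq> bot"
proof -
  have "t islimpt I"
  proof (cases "t < b")
    case True
    then have "t islimpt {t..b}" by simp
    moreover have "{t..b} \<subseteq> I"
      using mem_is_interval_1_I[OF assms(1,5,3)] by auto
    ultimately show ?thesis by (rule islimpt_subset)
  next
    case False
    with \<open>a < b\<close> have "t islimpt {a..t}" by simp
    moreover have "{a..t} \<subseteq> I"
      using mem_is_interval_1_I[OF assms(1,2,5)] by auto
    ultimately show ?thesis by (rule islimpt_subset)
  qed
  then show ?thesis
    by (simp add: trivial_limit_within)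
qed

lemma has_real_derivative_nonpos_imp_antimono_on:
  assumes "is_interval (I::real set)"
    and deriv: "\<And>t. t \<in> I \<Longrightarrow> (f has_real_derivative f' t) (at t within I)"
    and nonpos: "\<And>t. t \<in> I \<Longrightarrow> f' t \<le> 0"
  shows "antimono_on I f"
proof (rule monotone_onI)
  fix s t assume "s \<in> I" "t \<in> I" "s \<le> t"
  have sub: "{s..t} \<subseteq> I"
    using mem_is_interval_1_I[OF \<open>is_interval I\<close> \<open>s \<in> I\<close> \<open>t \<in> I\<close>] by auto
  show "f t \<le> f s"
  proof (cases "s = t")
    case False
    with \<open>s \<le> t\<close> have "s < t" by simp
    moreover have "(f has_derivative (*) (f' x)) (at x within {s..t})"
      if "s \<le> x" "x \<le> t" for x
      using deriv[THEN has_field_derivative_subset, of x "{s..t}"] that sub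
      by (auto simp: has_field_derivative_def)
    ultimately obtain x where x: "x \<in> {s<..<t}" and mvt: "f t - f s = f' x * (t - s)"
      using mvt_simple[of s t f "\<lambda>x. (*) (f' x)"] by auto
    have "x \<in> I"
      using x sub by auto
    with \<open>s < t\<close> have "f' x * (t - s) \<le> 0"
      by (simp add: nonpos mult_nonpos_nonneg)
    with mvt show ?thesis by simp
  qed simp
qed

theorem proposition4p4:
  fixes A :: "real \<Rightarrow> complex^'n^'n" and I :: "real set"
  assumes "is_interval I"
    and "\<exists>a\<in>I. \<exists>b\<in>I. a < b"
    and "\<And>t. t \<in> I \<Longrightarrow>
           (A has_vector_derivative (A t ** commut (A t) (cadj (A t)))) (at t within I)"
  shows "(\<forall>s\<in>I. \<forall>t\<in>I. s \<le> t \<longrightarrow> sqnorm (A t) \<le> sqnorm (A s))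
       \<and> (\<forall>t\<in>I. (\<exists>D. ((\<lambda>s. sqnorm (A s)) has_real_derivative D) (at t within I))
               \<and> (\<forall>D. ((\<lambda>s. sqnorm (A s)) has_real_derivative D) (at t within I)
                      \<longrightarrow> (D = 0 \<longleftrightarrow> normal_matrix (A t))))"
proof -
  define N where "N t = commut (A t) (cadj (A t))" for t
  have deriv: "((\<lambda>s. sqnorm (A s)) has_real_derivative - (norm (N t))\<^sup>2) (at t within I)"
    if "t \<in> I" for t
    using sqnorm_has_real_derivative_along_flow[OF assms(3)[OF that]] by (simp add: N_def)
  have antimono: "antimono_on I (\<lambda>s. sqnorm (A s))"
    by (rule has_real_derivative_nonpos_imp_antimono_on[OF assms(1) deriv]) simp_all
  have unique: "D = - (norm (N t))\<^sup>2"
    if "t \<in> I" "((\<lambda>s. sqnorm (A s)) has_real_derivative D) (at t within I)" for t D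
    using assms(2) at_within_interval_neq_bot[OF assms(1) _ _ _ that(1)]
      has_field_derivative_unique[OF that(2) deriv[OF that(1)]] by blast
  have "- (norm (N t))\<^sup>2 = 0 \<longleftrightarrow> normal_matrix (A t)" for t
    by (simp add: N_def normal_matrix_iff_commut_cadj_eq_0)
  with antimono deriv unique show ?thesis
    unfolding monotone_on_def by metis
qed

end
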